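(* Let $G=(V,E)$ be a finite simple graph and let $s\in[0,1]^{V}$. Then there exists a fort $F$ of $G$ with $\sum_{v\in F}s_v<1$ if and only if every optimal solution $x$ of the integer program $$\text{minimize }\sum_{v\in V}s_vx_v\ \text{ subject to }\ \sum_{v\in V}x_v\geq1,\quad x_u-x_v+\sum_{w\in N(u)\setminus\{v\}}x_w\geq0\ \ \forall v\in V,\ u\in N(v),\quad x\in\{0,1\}^V$$ has objective value less than one.
   Context: $N(u)$ denotes the neighborhood of $u$. A fort of $G$ is a non-empty set $F\subseteq V$ such that no vertex $u\in V\setminus F$ has exactly one neighbor in $F$. *)

theory Defs
  imports Complex_Main
begin

definition simple_graph :: "'a set \<Rightarrow> ('a \<Rightarrow> 'a \<Rightarrow> bool) \<Rightarrow> bool" where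
  "simple_graph V E \<longleftrightarrow> finite V \<and> (\<forall>u v. E u v \<longrightarrow> E v u) \<and> (\<forall>v. \<not> E v v)
     \<and> (\<forall>u v. E u v \<longrightarrow> u \<in> V \<and> v \<in> V)"

definition nbhd :: "'a set \<Rightarrow> ('a \<Rightarrow> 'a \<Rightarrow> bool) \<Rightarrow> 'a \<Rightarrow> 'a set" where
  "nbhd V E u = {w \<in> V. E u w}"

definition is_fort :: "'a set \<Rightarrow> ('a \<Rightarrow> 'a \<Rightarrow> bool) \<Rightarrow> 'a set \<Rightarrow> bool" where
  "is_fort V E F \<longleftrightarrow> F \<noteq> {} \<and> F \<subseteq> V \<and>
     (\<forall>u \<in> V - F. card (nbhd V E u \<inter> F) \<noteq> 1)"

definition ip_feasible :: "'a set \<Rightarrow> ('a \<Rightarrow> 'a \<Rightarrow> bool) \<Rightarrow> ('a \<Rightarrow> real) \<Rightarrow> bool" where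
  "ip_feasible V E x \<longleftrightarrow>
     (\<forall>v \<in> V. x v \<in> {0, 1}) \<and>
     (\<Sum>v\<in>V. x v) \<ge> 1 \<and>
     (\<forall>v \<in> V. \<forall>u \<in> nbhd V E v. x u - x v + (\<Sum>w \<in> nbhd V E u - {v}. x w) \<ge> 0)"

definition ip_obj :: "'a set \<Rightarrow> ('a \<Rightarrow> real) \<Rightarrow> ('a \<Rightarrow> real) \<Rightarrow> real" where
  "ip_obj V s x = (\<Sum>v\<in>V. s v * x v)"

definition ip_optimal :: "'a set \<Rightarrow> ('a \<Rightarrow> 'a \<Rightarrow> bool) \<Rightarrow> ('a \<Rightarrow> real) \<Rightarrow> ('a \<Rightarrow> real) \<Rightarrow> bool" where
  "ip_optimal V E s x \<longleftrightarrow> ip_feasible V E x \<and>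
     (\<forall>y. ip_feasible V E y \<longrightarrow> ip_obj V s x \<le> ip_obj V s y)"

end

theory Submission
  imports Defs "HOL-Library.Indicator_Function"
begin

text \<open>The 0/1 points of the integer program are exactly the indicator vectors of forts: for an
  edge uv with u outside and v inside F, the constraint for (v, u) says that u has a neighbour
  in F other than v. Hence the optimum of the program is the minimum weight of a fort, which
  exists because V itself is a fort.\<close>

lemma simple_graph_finite: "simple_graph V E \<Longrightarrow> finite V"
  by (simp add: simple_graph_def)

lemma nbhd_subset: "nbhd V E u \<subseteq> V"
  by (auto simp: nbhd_def)

lemma nbhd_sym: "simple_graph V E \<Longrightarrow> v \<in> V \<Longrightarrow> u \<in> nbhd V E v \<Longrightarrow> v \<in> nbhd V E u"
  by (auto simp: nbhd_def simple_graph_def)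

lemma finite_nbhd: "simple_graph V E \<Longrightarrow> finite (nbhd V E u)"
  using nbhd_subset simple_graph_finite by (rule finite_subset)

lemma sum_indicator_eq_real_card:
  "finite A \<Longrightarrow> (\<Sum>x\<in>A. indicator B x) = real (card (A \<inter> B))"
  using sum_indicator_mult[where f = "\<lambda>_. 1::real"] by simp

lemma is_fort_subset: "is_fort V E F \<Longrightarrow> F \<subseteq> V"
  by (simp add: is_fort_def)

lemma ip_obj_indicator:
  assumes "finite V" "F \<subseteq> V"
  shows "ip_obj V s (indicator F) = (\<Sum>v\<in>F. s v)"
  using assms by (simp add: ip_obj_def Int_absorb1)

lemma ip_feasible_cong:
  assumes "\<And>v. v \<in> V \<Longrightarrow> x v = y v"
  shows "ip_feasible V E x \<longleftrightarrow> ip_feasible V E y"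
proof -
  have "\<And>u. (\<Sum>w \<in> nbhd V E u - {v}. x w) = (\<Sum>w \<in> nbhd V E u - {v}. y w)" for v
    using assms by (intro sum.cong) (auto simp: nbhd_def)
  with assms show ?thesis
    unfolding ip_feasible_def by (simp add: nbhd_def)
qed

lemma ip_obj_cong:
  assumes "\<And>v. v \<in> V \<Longrightarrow> x v = y v"
  shows "ip_obj V s x = ip_obj V s y"
  using assms unfolding ip_obj_def by (intro sum.cong) auto

lemma ip_feasible_eq_indicator_support:
  assumes "ip_feasible V E x" "v \<in> V"
  shows "x v = indicator {v \<in> V. x v = 1} v"
proof -
  have "x v \<in> {0, 1}"
    using assms by (simp add: ip_feasible_def)
  with assms(2) show ?thesis
    by (auto simp: indicator_def)
qed

lemma indicator_edge_constraint_iff: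
  assumes "simple_graph V E" "F \<subseteq> V" "v \<in> V" "u \<in> nbhd V E v"
  shows "indicator F u - indicator F v + (\<Sum>w \<in> nbhd V E u - {v}. indicator F w) \<ge> (0::real)
    \<longleftrightarrow> u \<in> F \<or> v \<notin> F \<or> nbhd V E u \<inter> F \<noteq> {v}"
proof -
  let ?others = "nbhd V E u \<inter> F - {v}"
  have fin: "finite (nbhd V E u - {v})"
    using finite_nbhd[OF assms(1)] by (rule finite_Diff)
  have sum_eq: "(\<Sum>w \<in> nbhd V E u - {v}. indicator F w) = real (card ?others)"
    using sum_indicator_eq_real_card[OF fin, of F] by (simp add: Int_Diff Int_commute)
  have "v \<in> nbhd V E u"
    using nbhd_sym[OF assms(1,3,4)] .
  then have others_empty: "?others = {} \<longleftrightarrow> nbhd V E u \<inter> F = {v}" if "v \<in> F"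
    using that by blast
  have card_0: "card ?others = 0 \<longleftrightarrow> ?others = {}"
    using finite_nbhd[OF assms(1)] by simp
  show ?thesis
  proof (cases "u \<in> F \<or> v \<notin> F")
    case True
    then show ?thesis
      unfolding sum_eq by (auto simp: indicator_def)
  next
    case False
    then show ?thesis
      unfolding sum_eq using others_empty card_0 by (simp add: Suc_le_eq flip: neq0_conv)
  qed
qed

lemma ip_feasible_indicator_iff_fort:
  assumes "simple_graph V E" "F \<subseteq> V"
  shows "ip_feasible V E (indicator F) \<longleftrightarrow> is_fort V E F"
proof -
  have "finite F"
    using assms(2) simple_graph_finite[OF assms(1)] by (rule finite_subset)
  moreover have "(\<Sum>v\<in>V. indicator F v) = real (card F)"
    using simple_graph_finite[OF assms(1)] assms(2)
    by (simp add: sum_indicator_eq_real_card Int_absorb1)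
  ultimately have sum_ge_1: "(\<Sum>v\<in>V. indicator F v) \<ge> (1::real) \<longleftrightarrow> F \<noteq> {}"
    by (simp add: Suc_le_eq card_gt_0_iff)
  have "(\<forall>v \<in> V. \<forall>u \<in> nbhd V E v. u \<in> F \<or> v \<notin> F \<or> nbhd V E u \<inter> F \<noteq> {v})
    \<longleftrightarrow> (\<forall>u \<in> V - F. card (nbhd V E u \<inter> F) \<noteq> 1)" (is "?edges \<longleftrightarrow> ?fort")
  proof
    assume ?edges
    show ?fort
    proof (intro ballI notI)
      fix u
      assume u: "u \<in> V - F" and "card (nbhd V E u \<inter> F) = 1"
      then obtain v where v: "nbhd V E u \<inter> F = {v}"
        by (auto simp: card_1_singleton_iff)
      then have "v \<in> nbhd V E u" "v \<in> F"
        by auto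
      moreover from this(1) have "v \<in> V"
        by (rule subsetD[OF nbhd_subset])
      moreover have "u \<in> nbhd V E v"
        using nbhd_sym[OF assms(1)] u \<open>v \<in> nbhd V E u\<close> by simp
      ultimately show False
        using \<open>?edges\<close> u v by auto
    qed
  next
    assume ?fort
    show ?edges
    proof (intro ballI)
      fix v u
      assume "v \<in> V" and u_nbhd: "u \<in> nbhd V E v"
      from u_nbhd have "u \<in> V"
        by (rule subsetD[OF nbhd_subset])
      show "u \<in> F \<or> v \<notin> F \<or> nbhd V E u \<inter> F \<noteq> {v}"
      proof (rule ccontr)
        assume "\<not> (u \<in> F \<or> v \<notin> F \<or> nbhd V E u \<inter> F \<noteq> {v})"
        then have "u \<in> V - F" "card (nbhd V E u \<inter> F) = 1"
          using \<open>u \<in> V\<close> by auto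
        with \<open>?fort\<close> show False
          by blast
      qed
    qed
  qed
  with sum_ge_1 show ?thesis
    unfolding ip_feasible_def is_fort_def
    using indicator_edge_constraint_iff[OF assms] assms(2) by (simp add: indicator_def)
qed

lemma ip_feasible_support_is_fort:
  assumes "simple_graph V E" "ip_feasible V E x"
  shows "is_fort V E {v \<in> V. x v = 1}"
proof -
  have support_subset: "{v \<in> V. x v = 1} \<subseteq> V"
    by blast
  have "ip_feasible V E x \<longleftrightarrow> ip_feasible V E (indicator {v \<in> V. x v = 1})"
    by (rule ip_feasible_cong) (rule ip_feasible_eq_indicator_support[OF assms(2)])
  then show ?thesis
    using assms(2) ip_feasible_indicator_iff_fort[OF assms(1) support_subset] by simp
qed

lemma ip_obj_support:
  assumes "finite V" "ip_feasible V E x"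
  shows "ip_obj V s x = (\<Sum>v \<in> {v \<in> V. x v = 1}. s v)"
proof -
  have "ip_obj V s x = ip_obj V s (indicator {v \<in> V. x v = 1})"
    by (rule ip_obj_cong) (rule ip_feasible_eq_indicator_support[OF assms(2)])
  then show ?thesis
    using ip_obj_indicator[OF assms(1)] by simp
qed

lemma ex_min_weight_fort:
  fixes s :: "'a \<Rightarrow> real"
  assumes "simple_graph V E" "V \<noteq> {}"
  obtains F0 where "is_fort V E F0" "\<And>F. is_fort V E F \<Longrightarrow> (\<Sum>v\<in>F0. s v) \<le> (\<Sum>v\<in>F. s v)"
proof -
  let ?forts = "{F. is_fort V E F}" and ?weight = "\<lambda>F. \<Sum>v\<in>F. s v"
  have "?forts \<subseteq> Pow V"
    by (auto simp: is_fort_def)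
  then have "finite ?forts"
    by (rule finite_subset) (simp add: simple_graph_finite[OF assms(1)])
  moreover have "?forts \<noteq> {}"
    using assms(2) by (auto simp: is_fort_def)
  ultimately show thesis
    using arg_min_if_finite[of ?forts ?weight] that by (simp add: not_less)
qed

lemma ip_optimal_indicator_min_weight_fort:
  assumes "simple_graph V E" "is_fort V E F0"
    and min: "\<And>F. is_fort V E F \<Longrightarrow> (\<Sum>v\<in>F0. s v) \<le> (\<Sum>v\<in>F. s v)"
  shows "ip_optimal V E s (indicator F0)"
proof -
  have "ip_feasible V E (indicator F0)"
    using ip_feasible_indicator_iff_fort[OF assms(1) is_fort_subset[OF assms(2)]] assms(2) ..
  moreover have "ip_obj V s (indicator F0) = (\<Sum>v\<in>F0. s v)"
    using ip_obj_indicator[OF simple_graph_finite[OF assms(1)] is_fort_subset[OF assms(2)]] .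
  moreover have "(\<Sum>v\<in>F0. s v) \<le> ip_obj V s y" if "ip_feasible V E y" for y
    using ip_feasible_support_is_fort[OF assms(1) that] ip_obj_support[OF simple_graph_finite[OF assms(1)] that]
      min by simp
  ultimately show ?thesis
    unfolding ip_optimal_def by simp
qed

theorem theorem5p6:
  fixes V :: "'a set" and E :: "'a \<Rightarrow> 'a \<Rightarrow> bool" and s :: "'a \<Rightarrow> real"
  assumes "simple_graph V E" and "V \<noteq> {}"
    and "\<forall>v \<in> V. 0 \<le> s v \<and> s v \<le> 1"
  shows "(\<exists>F. is_fort V E F \<and> (\<Sum>v\<in>F. s v) < 1) \<longleftrightarrow>
         (\<forall>x. ip_optimal V E s x \<longrightarrow> ip_obj V s x < 1)"
proof
  assume "\<exists>F. is_fort V E F \<and> (\<Sum>v\<in>F. s v) < 1"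
  then obtain F where F: "is_fort V E F" "(\<Sum>v\<in>F. s v) < 1" by blast
  have "ip_obj V s (indicator F) = (\<Sum>v\<in>F. s v)"
    using ip_obj_indicator[OF simple_graph_finite[OF assms(1)] is_fort_subset[OF F(1)]] .
  moreover have "ip_feasible V E (indicator F)"
    using ip_feasible_indicator_iff_fort[OF assms(1) is_fort_subset[OF F(1)]] F(1) ..
  ultimately show "\<forall>x. ip_optimal V E s x \<longrightarrow> ip_obj V s x < 1"
    using F(2) by (fastforce simp: ip_optimal_def)
next
  assume optimal_lt_1: "\<forall>x. ip_optimal V E s x \<longrightarrow> ip_obj V s x < 1"
  obtain F0 where F0: "is_fort V E F0" "\<And>F. is_fort V E F \<Longrightarrow> (\<Sum>v\<in>F0. s v) \<le> (\<Sum>v\<in>F. s v)"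
    using ex_min_weight_fort[OF assms(1,2)] by blast
  have "ip_obj V s (indicator F0) < 1"
    using optimal_lt_1 ip_optimal_indicator_min_weight_fort[OF assms(1) F0] by blast
  then have "(\<Sum>v\<in>F0. s v) < 1"
    using ip_obj_indicator[OF simple_graph_finite[OF assms(1)] is_fort_subset[OF F0(1)]] by simp
  with F0(1) show "\<exists>F. is_fort V E F \<and> (\<Sum>v\<in>F. s v) < 1" by blast
qed

end
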